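(* Let $S$ be a measurement scenario and $g\colon S\to\mathbf 2$ a possibilistic predicate such that at least one possibilistic empirical model on $S$ satisfies $g$. Then there is a possibilistic empirical model $e$ on $S$ such that $g$ is equivalent to $g(e)$, i.e. for every possibilistic empirical model $d$ on $S$: $d$ satisfies $g$ if and only if $d$ satisfies $g(e)$ (equivalently, if and only if $d\le e$).
   Context: Measurement scenarios, $\mathcal E_S(U)=\prod_{x\in U}O_{S,x}$, possibilistic empirical models (families of non-empty subsets $e_\sigma\subseteq\mathcal E_S(\sigma)$, $\sigma\in\Sigma_S$, with $e_\tau=\{s|_\tau:s\in e_\sigma\}$ for $\tau\subseteq\sigma$), their order $d\le e$ iff $d_\sigma\subseteq e_\sigma$ for all $\sigma$, deterministic procedures $f=(\pi_f,\alpha_f)$ (a simplicial relation $\pi_f$ from $\Sigma_T$ to $\Sigma_S$ and maps $\alpha_{f,x}\colon\mathcal E_S(\pi_f(x))\to O_{T,x}$), possibilistic procedures $\bigvee_if_i$ (non-empty finite sets of deterministic procedures) and their action $\mathrm{Emp}_{\mathbb B}$ are as follows: for deterministic $f$, $(\mathrm{Emp}_{\mathbb B}(f)e)_\sigma=\{(\alpha_{f,x}(s|_{\pi_f(x)}))_{x\in\sigma}: s\in e_{\pi_f(\sigma)}\}$, and $\mathrm{Emp}_{\mathbb B}(\bigvee_if_i)e$ is the contextwise union of the $\mathrm{Emp}_{\mathbb B}(f_i)e$. The scenario $\mathbf 2$ has a single measurement $*$ with outcomes $\{0,1\}$. A possibilistic predicate on $S$ is a possibilistic procedure $g\colon S\to\mathbf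 2$; a possibilistic model $e$ satisfies $g$ if $(\mathrm{Emp}_{\mathbb B}(g)e)_{\{*\}}=\{1\}$. Given a possibilistic model $e$ on $S$, the induced predicate is $g(e)=\bigvee_{\sigma\in\Sigma_S}g(e)_\sigma$, where $g(e)_\sigma$ is the deterministic procedure with $\pi( * )=\sigma$ and $\alpha_*\colon\mathcal E_S(\sigma)\to\{0,1\}$ the characteristic function of $e_\sigma$. *)

theory Defs
  imports Main "HOL-Library.FuncSet"
begin

record ('x, 'o) scenario =
  meas :: "'x set"
  ctx  :: "'x set set"
  outc :: "'x \<Rightarrow> 'o set"

definition scenario :: "('x, 'o) scenario \<Rightarrow> bool" where
  "scenario S \<longleftrightarrow> finite (meas S) \<and> ctx S \<subseteq> Pow (meas S)
     \<and> (\<forall>\<sigma>\<in>ctx S. \<forall>\<tau>. \<tau> \<subseteq> \<sigma> \<longrightarrow> \<tau> \<in> ctx S)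
     \<and> (\<forall>x\<in>meas S. {x} \<in> ctx S)
     \<and> (\<forall>x\<in>meas S. finite (outc S x) \<and> outc S x \<noteq> {})"

definition events :: "('x, 'o) scenario \<Rightarrow> 'x set \<Rightarrow> ('x \<Rightarrow> 'o) set" where
  "events S U = PiE U (outc S)"

definition poss_model :: "('x, 'o) scenario \<Rightarrow> ('x set \<Rightarrow> ('x \<Rightarrow> 'o) set) \<Rightarrow> bool" where
  "poss_model S e \<longleftrightarrow>
     (\<forall>\<sigma>\<in>ctx S. e \<sigma> \<subseteq> events S \<sigma> \<and> e \<sigma> \<noteq> {})
     \<and> (\<forall>\<sigma>\<in>ctx S. \<forall>\<tau>. \<tau> \<subseteq> \<sigma> \<longrightarrow> e \<tau> = (\<lambda>s. restrict s \<tau>) ` e \<sigma>)"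

definition poss_le :: "('x, 'o) scenario \<Rightarrow> ('x set \<Rightarrow> ('x \<Rightarrow> 'o) set)
    \<Rightarrow> ('x set \<Rightarrow> ('x \<Rightarrow> 'o) set) \<Rightarrow> bool" where
  "poss_le S d e \<longleftrightarrow> (\<forall>\<sigma>\<in>ctx S. d \<sigma> \<subseteq> e \<sigma>)"

text \<open>Deterministic procedures T \<rightarrow> S: a simplicial relation \<pi> from \<Sigma>_T to \<Sigma>_S
  (given as x \<mapsto> \<pi>(x)) and maps \<alpha>_x : \<E>_S(\<pi>(x)) \<rightarrow> O_{T,x}.\<close>
type_synonym ('y, 'x, 'o, 'p) det_proc = "('y \<Rightarrow> 'x set) \<times> ('y \<Rightarrow> ('x \<Rightarrow> 'o) \<Rightarrow> 'p)"

definition rel_image :: "('y \<Rightarrow> 'x set) \<Rightarrow> 'y set \<Rightarrow> 'x set" where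
  "rel_image \<pi> \<sigma> = (\<Union>x\<in>\<sigma>. \<pi> x)"

definition det_proc :: "('y, 'p) scenario \<Rightarrow> ('x, 'o) scenario
    \<Rightarrow> ('y, 'x, 'o, 'p) det_proc \<Rightarrow> bool" where
  "det_proc T S f \<longleftrightarrow>
     (\<forall>x. x \<notin> meas T \<longrightarrow> fst f x = {})
     \<and> (\<forall>\<sigma>\<in>ctx T. rel_image (fst f) \<sigma> \<in> ctx S)
     \<and> (\<forall>x\<in>meas T. \<forall>s\<in>events S (fst f x). snd f x s \<in> outc T x)"

definition emp_det :: "('y, 'x, 'o, 'p) det_proc \<Rightarrow> ('x set \<Rightarrow> ('x \<Rightarrow> 'o) set)
    \<Rightarrow> ('y set \<Rightarrow> ('y \<Rightarrow> 'p) set)" where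
  "emp_det f e \<sigma> =
     (\<lambda>s. \<lambda>x\<in>\<sigma>. snd f x (restrict s (fst f x))) ` e (rel_image (fst f) \<sigma>)"

definition poss_proc :: "('y, 'p) scenario \<Rightarrow> ('x, 'o) scenario
    \<Rightarrow> ('y, 'x, 'o, 'p) det_proc set \<Rightarrow> bool" where
  "poss_proc T S F \<longleftrightarrow> finite F \<and> F \<noteq> {} \<and> (\<forall>f\<in>F. det_proc T S f)"

definition emp_poss :: "('y, 'x, 'o, 'p) det_proc set \<Rightarrow> ('x set \<Rightarrow> ('x \<Rightarrow> 'o) set)
    \<Rightarrow> ('y set \<Rightarrow> ('y \<Rightarrow> 'p) set)" where
  "emp_poss F e \<sigma> = (\<Union>f\<in>F. emp_det f e \<sigma>)"

text \<open>The scenario 2: a single measurement * (the unit element) with outcomes {0,1}.\<close>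
definition scen2 :: "(unit, nat) scenario" where
  "scen2 = \<lparr>meas = {()}, ctx = {{}, {()}}, outc = (\<lambda>_. {0, 1})\<rparr>"

definition poss_predicate :: "('x, 'o) scenario \<Rightarrow> (unit, 'x, 'o, nat) det_proc set \<Rightarrow> bool" where
  "poss_predicate S g \<longleftrightarrow> poss_proc scen2 S g"

definition satisfies :: "('x set \<Rightarrow> ('x \<Rightarrow> 'o) set) \<Rightarrow> (unit, 'x, 'o, nat) det_proc set \<Rightarrow> bool" where
  "satisfies e g \<longleftrightarrow> emp_poss g e {()} = {(\<lambda>x\<in>{()}. 1)}"

text \<open>The outcome set of context {*} consists of assignments; {1} is the singleton
  containing the assignment * \<mapsto> 1.\<close>

text \<open>The predicate induced by a model e: g(e) = \<Or>_{\<sigma>\<in>\<Sigma>_S} g(e)_\<sigma>.\<close>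
definition induced_pred :: "('x, 'o) scenario \<Rightarrow> ('x set \<Rightarrow> ('x \<Rightarrow> 'o) set)
    \<Rightarrow> (unit, 'x, 'o, nat) det_proc set" where
  "induced_pred S e = (\<lambda>\<sigma>. (\<lambda>_. \<sigma>, \<lambda>_ s. if s \<in> e \<sigma> then 1 else 0)) ` ctx S"

end

theory Submission
  imports Defs
begin

text \<open>Along each branch f of a predicate, satisfaction only asks that every outcome the model
  allows on the context probed by f be sent to 1. This condition passes to smaller models and
  to contextwise unions, so the union of all models satisfying g is itself a model satisfying
  g, the greatest one; a model satisfies g exactly when it lies below it. The induced
  predicate of a model e asks precisely that on every context the outcomes lie in e.\<close>

lemma poss_model_nonempty: "poss_model S d \<Longrightarrow> \<sigma> \<in> ctx S \<Longrightarrow> d \<sigma> \<noteq> {}"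
  unfolding poss_model_def by blast

lemma poss_model_extensional:
  "poss_model S d \<Longrightarrow> \<sigma> \<in> ctx S \<Longrightarrow> d \<sigma> \<subseteq> extensional \<sigma>"
  unfolding poss_model_def events_def by (blast dest: PiE_iff[THEN iffD1])

lemma rel_image_singleton: "rel_image \<pi> {y} = \<pi> y"
  unfolding rel_image_def by simp

lemma emp_det_singleton:
  assumes "poss_model S d" and "fst f y \<in> ctx S"
  shows "emp_det f d {y} = (\<lambda>s. \<lambda>x\<in>{y}. snd f y s) ` d (fst f y)"
proof -
  have "restrict s (fst f y) = s" if "s \<in> d (fst f y)" for s
    using poss_model_extensional[OF assms] that by (blast intro: extensional_restrict)
  then show ?thesis
    unfolding emp_det_def rel_image_singleton by (auto intro!: image_cong restrict_ext)
qed

lemma UN_eq_singleton_iff: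
  "(\<Union>i\<in>I. A i) = {c} \<longleftrightarrow> (\<exists>i\<in>I. A i \<noteq> {}) \<and> (\<forall>i\<in>I. A i \<subseteq> {c})"
  by blast

lemma satisfies_iff:
  assumes "poss_model S d" and "G \<noteq> {}" and "\<forall>f\<in>G. fst f () \<in> ctx S"
  shows "satisfies d G \<longleftrightarrow> (\<forall>f\<in>G. \<forall>s\<in>d (fst f ()). snd f () s = 1)"
proof -
  have "satisfies d G \<longleftrightarrow>
      (\<Union>f\<in>G. (\<lambda>s. \<lambda>x\<in>{()}. snd f () s) ` d (fst f ())) = {\<lambda>x\<in>{()}. 1}"
    unfolding satisfies_def emp_poss_def using assms by (simp add: emp_det_singleton)
  also have "\<dots> \<longleftrightarrow> (\<forall>f\<in>G. \<forall>s\<in>d (fst f ()). snd f () s = 1)"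
  proof -
    have value_eq_one: "(\<lambda>x\<in>{()}. snd f () s) = (\<lambda>x\<in>{()}. 1) \<longleftrightarrow> snd f () s = 1" for f s
      by (metis insertI1 restrict_apply')
    have "\<exists>f\<in>G. d (fst f ()) \<noteq> {}"
      using assms poss_model_nonempty by blast
    then show ?thesis
      unfolding UN_eq_singleton_iff image_subset_iff singleton_iff value_eq_one by simp
  qed
  finally show ?thesis .
qed

lemma poss_predicate_branches:
  assumes "poss_predicate S g"
  shows "g \<noteq> {}" and "\<forall>f\<in>g. fst f () \<in> ctx S"
proof -
  have "{()} \<in> ctx scen2" by (simp add: scen2_def)
  then have "rel_image (fst f) {()} \<in> ctx S" if "f \<in> g" for f
    using assms that unfolding poss_predicate_def poss_proc_def det_proc_def by blast
  then show "\<forall>f\<in>g. fst f () \<in> ctx S" by (simp add: rel_image_singleton)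
  show "g \<noteq> {}" using assms unfolding poss_predicate_def poss_proc_def by blast
qed

lemma poss_model_UN:
  assumes "M \<noteq> {}" and "\<forall>d\<in>M. poss_model S d"
  shows "poss_model S (\<lambda>\<sigma>. \<Union>d\<in>M. d \<sigma>)"
  using assms unfolding poss_model_def image_UN by (auto intro!: SUP_cong)

definition greatest_sat_model :: "('x, 'o) scenario \<Rightarrow> (unit, 'x, 'o, nat) det_proc set
    \<Rightarrow> 'x set \<Rightarrow> ('x \<Rightarrow> 'o) set" where
  "greatest_sat_model S g \<sigma> = (\<Union>d\<in>{d. poss_model S d \<and> satisfies d g}. d \<sigma>)"

lemma poss_model_greatest_sat_model:
  assumes "\<exists>e0. poss_model S e0 \<and> satisfies e0 g"
  shows "poss_model S (greatest_sat_model S g)"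
  unfolding greatest_sat_model_def using assms by (intro poss_model_UN) auto

lemma satisfies_iff_le_greatest_sat_model:
  assumes "poss_predicate S g" and "poss_model S d"
  shows "satisfies d g \<longleftrightarrow> poss_le S d (greatest_sat_model S g)"
proof
  assume "satisfies d g"
  then show "poss_le S d (greatest_sat_model S g)"
    using assms(2) unfolding poss_le_def greatest_sat_model_def by blast
next
  note branches = poss_predicate_branches[OF assms(1)]
  assume le: "poss_le S d (greatest_sat_model S g)"
  show "satisfies d g"
    unfolding satisfies_iff[OF assms(2) branches]
  proof (intro ballI)
    fix f s assume f: "f \<in> g" and "s \<in> d (fst f ())"
    then obtain d' where "poss_model S d'" "satisfies d' g" "s \<in> d' (fst f ())"
      using le branches unfolding poss_le_def greatest_sat_model_def by blast
    then show "snd f () s = 1"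
      using satisfies_iff[OF _ branches] f by blast
  qed
qed

lemma satisfies_induced_pred_iff:
  assumes "poss_model S d" and "ctx S \<noteq> {}"
  shows "satisfies d (induced_pred S e) \<longleftrightarrow> poss_le S d e"
proof -
  have "induced_pred S e \<noteq> {}" and "\<forall>f\<in>induced_pred S e. fst f () \<in> ctx S"
    using assms(2) unfolding induced_pred_def by auto
  from satisfies_iff[OF assms(1) this] show ?thesis
    unfolding induced_pred_def poss_le_def by auto
qed

theorem mainTheorem3:
  fixes S :: "('x, 'o) scenario"
    and g :: "(unit, 'x, 'o, nat) det_proc set"
  assumes "scenario S"
    and "poss_predicate S g"
    and "\<exists>e0. poss_model S e0 \<and> satisfies e0 g"
  shows "\<exists>e. poss_model S e \<and>
           (\<forall>d. poss_model S d \<longrightarrow>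
                (satisfies d g \<longleftrightarrow> satisfies d (induced_pred S e))
              \<and> (satisfies d g \<longleftrightarrow> poss_le S d e))"
proof -
  have "ctx S \<noteq> {}"
    using poss_predicate_branches[OF assms(2)] by blast
  then show ?thesis
    using poss_model_greatest_sat_model[OF assms(3)]
      satisfies_iff_le_greatest_sat_model[OF assms(2)] satisfies_induced_pred_iff
    by blast
qed

end
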